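(* Let $p$ be a prime, $w\ge1$, $n\ge2$, and $\mu\ge1$ an integer with $2^\mu<p$. Let $C=\{\mathbf x\in\mathbb{F}_{p^w}^n:\sum_{i=1}^nx_i=0\}$ be the code of additive secret sharings of $0$. For any family $\boldsymbol\tau=(\tau^{(1)},\dots,\tau^{(n)})$ with $\tau^{(j)}:\mathbb{F}_{p^w}\to\{0,1\}^\mu$, \[ SD(\boldsymbol\tau(C),\boldsymbol\tau(\mathcal U_n))\le\frac12\cdot2^\mu\cdot c_\mu^{n-2},\qquad c_\mu=\frac{2^\mu\sin(\pi/2^\mu)}{p\sin(\pi/p)}. \]
   Context: For $S\subseteq\mathbb{F}_{p^w}^n$, $\boldsymbol\tau(S)$ is the distribution of $(\tau^{(1)}(x_1),\dots,\tau^{(n)}(x_n))$ with $\mathbf x$ uniform on $S$; $\mathcal U_n=\mathbb{F}_{p^w}^n$; $SD$ denotes statistical distance. *)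

theory Defs
  imports "HOL-Probability.Probability"
begin

text \<open>Vectors in F^n are represented as extensional functions on the index set {..<n}.\<close>

definition vecs :: "nat \<Rightarrow> (nat \<Rightarrow> 'a) set" where
  "vecs n = PiE {..<n} (\<lambda>_. UNIV)"

definition additive_code :: "nat \<Rightarrow> (nat \<Rightarrow> 'a::comm_monoid_add) set" where
  "additive_code n = {x \<in> vecs n. (\<Sum>i<n. x i) = 0}"

definition leak_dist :: "nat \<Rightarrow> (nat \<Rightarrow> 'a \<Rightarrow> 'b) \<Rightarrow> (nat \<Rightarrow> 'a) set \<Rightarrow> 'b list pmf" where
  "leak_dist n \<tau> S = map_pmf (\<lambda>x. map (\<lambda>j. \<tau> j (x j)) [0..<n]) (pmf_of_set S)"

definition stat_dist :: "'b pmf \<Rightarrow> 'b pmf \<Rightarrow> real" where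
  "stat_dist P Q = (1/2) * infsum (\<lambda>y. \<bar>pmf P y - pmf Q y\<bar>) UNIV"

end

(*
  Let T be the trace from F_(p^w) onto F_p and chi_alpha(x) = exp(2 pi i T(alpha x) / p) the
  additive characters.  Counting the sharings of 0 in a product of fibres by orthogonality of
  characters, the probabilities of a leakage value under tau(C) and tau(U_n) differ by |F|^-n times
  the sum over alpha /= 0 of the products over j of the character sums over the fibres of tau^(j).
  Hence SD <= 1/2 sum_(alpha /= 0) prod_j A_j(alpha), where A_j(alpha) is the normalised l1-mass of
  these fibre sums.  For alpha /= 0 each A_j(alpha) is at most c_mu: rotating every fibre sum onto the
  positive real axis bounds A_j(alpha) by the average over residues k of max_b cos(2 pi k / p - phi_b);
  m distinct p-th roots of unity sum to at most sin(pi m / p) / sin(pi / p) in absolute value, and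
  concavity of the sine turns the sum over the 2^mu fibres into 2^mu sin(pi / 2^mu).  All factors but
  the first two are bounded by c_mu; those two are handled by AM-GM and Parseval, which gives
  sum_alpha A_j(alpha)^2 <= 2^mu.
*)
theory Submission
  imports Defs "HOL-Computational_Algebra.Polynomial" "HOL-Number_Theory.Residues"
begin

section \<open>Sums of cosines over roots of unity\<close>

lemma cos_le_cos_of_abs_le:
  fixes x y :: real
  assumes "\<bar>x\<bar> \<le> \<bar>y\<bar>" and "\<bar>y\<bar> \<le> pi"
  shows "cos y \<le> cos x"
  using cos_monotone_0_pi_le[of "\<bar>x\<bar>" "\<bar>y\<bar>"] assms by simp

lemma sin_le_tangent:
  fixes x a :: real
  assumes "0 \<le> x" "x \<le> pi" "0 \<le> a" "a \<le> pi"
  shows "sin x \<le> sin a + cos a * (x - a)"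
proof (cases x a rule: linorder_cases)
  case less
  obtain z where z: "x < z" "z < a" "sin a - sin x = (a - x) * cos z"
    using MVT2[OF less, of sin cos] by (auto intro: DERIV_sin)
  have "cos a \<le> cos z" using z assms by (intro cos_monotone_0_pi_le) auto
  then have "(a - x) * cos a \<le> (a - x) * cos z" using less by (intro mult_left_mono) auto
  then show ?thesis using z by (simp add: algebra_simps)
next
  case greater
  obtain z where z: "a < z" "z < x" "sin x - sin a = (x - a) * cos z"
    using MVT2[OF greater, of sin cos] by (auto intro: DERIV_sin)
  have "cos z \<le> cos a" using z assms by (intro cos_monotone_0_pi_le) auto
  then have "(x - a) * cos z \<le> (x - a) * cos a" using greater by (intro mult_left_mono) auto
  then show ?thesis using z by (simp add: algebra_simps)
qed simp

lemma sum_sin_le_card_mult_sin: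
  fixes x :: "'b \<Rightarrow> real"
  assumes "finite B" and "B \<noteq> {}"
    and range: "\<And>b. b \<in> B \<Longrightarrow> 0 \<le> x b \<and> x b \<le> pi" and total: "(\<Sum>b\<in>B. x b) = pi"
  shows "(\<Sum>b\<in>B. sin (x b)) \<le> card B * sin (pi / card B)"
proof -
  define m where "m = real (card B)"
  have m: "m \<ge> 1" using assms(1,2) by (simp add: m_def Suc_le_eq card_gt_0_iff)
  have "(\<Sum>b\<in>B. sin (x b)) \<le> (\<Sum>b\<in>B. sin (pi / m) + cos (pi / m) * (x b - pi / m))"
    using range m by (intro sum_mono sin_le_tangent) (auto simp: field_simps)
  also have "\<dots> = m * sin (pi / m) + cos (pi / m) * ((\<Sum>b\<in>B. x b) - m * (pi / m))"
    by (simp add: sum.distrib sum_subtractf flip: sum_distrib_left) (simp add: m_def algebra_simps)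
  also have "\<dots> = m * sin (pi / m)" using total m by simp
  finally show ?thesis unfolding m_def .
qed

lemma sum_cos_arith_progression:
  fixes y d :: real and n :: nat
  shows "sin (d / 2) * (\<Sum>i<n. cos (y + i * d)) = sin (n * d / 2) * cos (y + (real n - 1) * d / 2)"
proof -
  define f where "f i = sin (y + (real i - 1/2) * d)" for i :: nat
  have "2 * sin (d / 2) * cos (y + i * d) = f (Suc i) - f i" for i
    unfolding f_def sin_diff_sin by (simp add: algebra_simps add_divide_distrib diff_divide_distrib)
  then have "2 * sin (d / 2) * (\<Sum>i<n. cos (y + i * d)) = f n - f 0"
    by (simp add: sum_distrib_left sum_lessThan_telescope)
  also have "\<dots> = 2 * sin (n * d / 2) * cos (y + (real n - 1) * d / 2)"
    unfolding f_def sin_diff_sin by (simp add: algebra_simps add_divide_distrib diff_divide_distrib)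
  finally show ?thesis by simp
qed

lemma sum_cos_arith_progression_le:
  fixes y d :: real and n :: nat
  assumes "0 < d" "d < 2 * pi" "n * d \<le> 2 * pi"
  shows "(\<Sum>i<n. cos (y + i * d)) \<le> sin (n * d / 2) / sin (d / 2)"
proof -
  have "sin (d / 2) > 0" using assms by (intro sin_gt_zero) auto
  moreover have "sin (n * d / 2) \<ge> 0" using assms by (intro sin_ge_zero) auto
  then have "sin (n * d / 2) * cos (y + (real n - 1) * d / 2) \<le> sin (n * d / 2)"
    using mult_left_mono[OF cos_le_one] by fastforce
  ultimately show ?thesis
    using sum_cos_arith_progression[where y = y and d = d and n = n] by (simp add: pos_le_divide_eq mult.commute)
qed

lemma sum_cos_two_sided_arith_progression:
  fixes x d :: real and a b :: nat
  shows "(\<Sum>i<a. cos (x + i * d)) + (\<Sum>j<b. cos (x - (real j + 1) * d))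
    = (\<Sum>i<a + b. cos ((x - b * d) + i * d))"
proof -
  define g where "g i = cos ((x - b * d) + real i * d)" for i
  have "(\<Sum>j<b. cos (x - (real j + 1) * d)) = (\<Sum>i<b. g i)"
    by (subst (2) sum.atLeastLessThan_rev[where n = 0, simplified atLeast0LessThan])
       (intro sum.cong refl, simp add: g_def algebra_simps of_nat_diff)
  moreover have "(\<Sum>i<a. cos (x + i * d)) = (\<Sum>i\<in>{b..<a + b}. g i)"
    using sum.shift_bounds_nat_ivl[of g 0 b a] by (simp add: atLeast0LessThan g_def algebra_simps)
  ultimately show ?thesis
    using sum.atLeastLessThan_concat[of 0 b "a + b" g] by (simp add: atLeast0LessThan g_def)
qed

lemma sum_le_sum_lessThan_card_if_antitone:
  fixes f :: "nat \<Rightarrow> real"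
  assumes "\<And>i j. i \<le> j \<Longrightarrow> j < N \<Longrightarrow> f j \<le> f i" and "P \<subseteq> {..<N}"
  shows "sum f P \<le> (\<Sum>i<card P. f i)"
  using assms
proof (induction N arbitrary: P)
  case (Suc N)
  show ?case
  proof (cases "N \<in> P")
    case False
    then have "P \<subseteq> {..<N}" using Suc.prems(2) less_Suc_eq by auto
    then show ?thesis using Suc by simp
  next
    case True
    have P': "P - {N} \<subseteq> {..<N}" and fin: "finite P"
      using Suc.prems(2) by (auto intro: finite_subset)
    have "card (P - {N}) \<le> N" using card_mono[OF _ P'] by simp
    then have "f N \<le> f (card (P - {N}))" using Suc.prems(1) by simp
    moreover have "sum f (P - {N}) \<le> (\<Sum>i<card (P - {N}). f i)" using Suc.IH[OF _ P'] Suc.prems(1) by simp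
    moreover have "card P = Suc (card (P - {N}))" using card_Suc_Diff1[OF fin True] by simp
    ultimately show ?thesis using sum.remove[OF fin True, of f] by simp
  qed
qed simp

lemma cos_centered_antitone:
  fixes p i j :: nat and \<psi> :: real
  assumes psi: "\<bar>\<psi>\<bar> \<le> pi / p" and "i \<le> j" and "2 * j < p"
  shows "cos (2 * pi * j / p - \<psi>) \<le> cos (2 * pi * i / p - \<psi>)"
proof (rule cos_le_cos_of_abs_le)
  define u where "u = pi / p"
  have u: "u > 0" "p * u = pi" using assms by (auto simp: u_def)
  have ij: "i * u \<le> j * u" using u \<open>i \<le> j\<close> by (simp add: mult_right_mono)
  have "(2 * j + 1) * u \<le> p * u" using u \<open>2 * j < p\<close> by (intro mult_right_mono) auto
  then have jpi: "2 * (j * u) + u \<le> pi" using u by (simp add: algebra_simps)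
  have i01: "i * u = 0 \<or> u \<le> i * u" and j01: "j * u = 0 \<or> u \<le> j * u"
    using u by (cases i; cases j; simp)+
  have angle: "2 * pi * k / p = 2 * (k * u)" for k :: nat by (simp add: u_def)
  show "\<bar>2 * pi * i / p - \<psi>\<bar> \<le> \<bar>2 * pi * j / p - \<psi>\<bar>" "\<bar>2 * pi * j / p - \<psi>\<bar> \<le> pi"
    unfolding angle using psi i01 j01 ij jpi u unfolding u_def[symmetric] by linarith+
qed

lemma sum_cos_two_halves_le:
  fixes p a b :: nat and \<psi> :: real
  assumes "p \<ge> 3" and "a + b \<le> p"
  shows "(\<Sum>i<a. cos (2 * pi * i / p - \<psi>)) + (\<Sum>j<b. cos (2 * pi * (j + 1) / p + \<psi>))
    \<le> sin (pi * (a + b) / p) / sin (pi / p)"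
proof -
  define d where "d = 2 * pi / p"
  have "cos (2 * pi * i / p - \<psi>) = cos (- \<psi> + i * d)" for i :: nat
    unfolding d_def by (rule arg_cong[where f = cos]) (simp add: field_simps)
  moreover have "cos (2 * pi * (j + 1) / p + \<psi>) = cos (- \<psi> - (real j + 1) * d)" for j :: nat
    unfolding d_def by (subst cos_minus[symmetric]) (rule arg_cong[where f = cos], simp add: field_simps)
  ultimately have "(\<Sum>i<a. cos (2 * pi * i / p - \<psi>)) + (\<Sum>j<b. cos (2 * pi * (j + 1) / p + \<psi>))
      = (\<Sum>i<a + b. cos ((- \<psi> - b * d) + i * d))"
    using sum_cos_two_sided_arith_progression[where x = "- \<psi>" and d = d] by simp
  also have "\<dots> \<le> sin ((a + b) * d / 2) / sin (d / 2)"
  proof (rule sum_cos_arith_progression_le)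
    have "real (a + b) * (2 * pi) \<le> p * (2 * pi)"
      using assms by (intro mult_right_mono) auto
    then show "real (a + b) * d \<le> 2 * pi"
      using assms by (simp add: d_def field_simps)
  qed (use assms in \<open>auto simp: d_def field_simps\<close>)
  finally show ?thesis by (simp add: d_def mult.commute)
qed

lemma sum_cos_centered_le:
  fixes p h :: nat and \<psi> :: real
  assumes p: "p = 2 * h + 1" "h > 0" and psi: "\<bar>\<psi>\<bar> \<le> pi / p" and D: "D \<subseteq> {..<p}"
  shows "(\<Sum>i\<in>D. cos (2 * pi * i / p - \<psi>)) \<le> sin (pi * card D / p) / sin (pi / p)"
proof -
  \<comment> \<open>Residues above \<open>h\<close> are reflected to \<open>p - i\<close>; each half is then dominated by an initial
     segment, and the two initial segments together form one arc of consecutive roots of unity.\<close>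
  define f where "f \<psi>' i = cos (2 * pi * real i / p - \<psi>')" for \<psi>' i
  define Dneg where "Dneg = (\<lambda>i. p - 1 - i) ` (D - {..h})"
  define a b where "a = card (D \<inter> {..h})" and "b = card Dneg"
  have fin: "finite D" using D finite_subset by blast
  have inj: "inj_on (\<lambda>i. p - 1 - i) (D - {..h})"
    using D by (intro inj_onI) (auto dest!: subsetD[OF D])
  have ab: "a + b = card D"
    unfolding a_def b_def Dneg_def card_image[OF inj] using card_Int_Diff[OF fin] by simp
  have reflect: "f \<psi> i = f (- \<psi>) (p - 1 - i + 1)" if "i \<in> D - {..h}" for i
  proof -
    have "2 * pi * real i / p - \<psi> = - (2 * pi * real (p - 1 - i + 1) / p + \<psi>) + 2 * pi"
      using that D p by (auto simp: of_nat_diff field_simps)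
    then show ?thesis unfolding f_def by (simp only: cos_periodic cos_minus) simp
  qed
  have anti: "f \<psi>' j \<le> f \<psi>' i" if "\<bar>\<psi>'\<bar> \<le> pi / p" "i \<le> j" "2 * j < p" for \<psi>' i j
    unfolding f_def using that by (rule cos_centered_antitone)
  have "(\<Sum>i\<in>D. f \<psi> i) = sum (f \<psi>) (D \<inter> {..h}) + sum (f \<psi>) (D - {..h})"
    using fin by (rule sum.Int_Diff)
  also have "sum (f \<psi>) (D - {..h}) = (\<Sum>j\<in>Dneg. f (- \<psi>) (j + 1))"
    unfolding Dneg_def sum.reindex[OF inj] comp_def using reflect by (intro sum.cong) auto
  also have "sum (f \<psi>) (D \<inter> {..h}) \<le> (\<Sum>i<a. f \<psi> i)"
    unfolding a_def using psi p(1)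
    by (intro sum_le_sum_lessThan_card_if_antitone[where N = "h + 1"] anti) auto
  also have "(\<Sum>j\<in>Dneg. f (- \<psi>) (j + 1)) \<le> (\<Sum>j<b. f (- \<psi>) (j + 1))"
    unfolding b_def using psi p(1) D
    by (intro sum_le_sum_lessThan_card_if_antitone[where N = h] anti) (auto simp: Dneg_def)
  also have "(\<Sum>i<a. f \<psi> i) + (\<Sum>j<b. f (- \<psi>) (j + 1)) \<le> sin (pi * card D / p) / sin (pi / p)"
    using sum_cos_two_halves_le[of p a b \<psi>] p ab card_mono[OF _ D] by (simp add: f_def)
  finally show ?thesis by (simp add: f_def)
qed

lemma nearest_multiple_angle:
  fixes \<phi> :: real
  assumes "p > 0"
  shows "\<exists>r :: int. \<bar>\<phi> - 2 * pi * r / p\<bar> \<le> pi / p"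
proof
  define r where "r = round (\<phi> * p / (2 * pi))"
  have "\<bar>\<phi> - 2 * pi * r / p\<bar> = (2 * pi / p) * \<bar>of_int r - \<phi> * p / (2 * pi)\<bar>"
    using assms by (simp add: field_simps abs_mult flip: abs_minus_commute)
  also have "\<dots> \<le> (2 * pi / p) * (1 / 2)"
    unfolding r_def using assms by (intro mult_left_mono of_int_round_abs_le) auto
  finally show "\<bar>\<phi> - 2 * pi * r / p\<bar> \<le> pi / p" by simp
qed

lemma sum_cos_roots_of_unity_le:
  fixes p :: nat and \<phi> :: real
  assumes "odd p" "p \<ge> 3" and K: "K \<subseteq> {..<p}"
  shows "(\<Sum>k\<in>K. cos (2 * pi * k / p - \<phi>)) \<le> sin (pi * card K / p) / sin (pi / p)"
proof -
  obtain h where p: "p = 2 * h + 1" "h > 0"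
  proof
    show "p = 2 * ((p - 1) div 2) + 1" "(p - 1) div 2 > 0" using assms by presburger+
  qed
  have pos: "real p > 0" using p by simp
  \<comment> \<open>rotating \<open>\<phi>\<close> by a multiple of \<open>2 pi / p\<close> only permutes the residues\<close>
  obtain r :: int where psi: "\<bar>\<phi> - 2 * pi * r / p\<bar> \<le> pi / p"
    using nearest_multiple_angle[OF pos] by blast
  define \<psi> where "\<psi> = \<phi> - 2 * pi * r / p"
  define d where "d k = nat ((int k - r) mod p)" for k :: nat
  have rotate: "cos (2 * pi * k / p - \<phi>) = cos (2 * pi * d k / p - \<psi>)" for k
  proof -
    have "int k - r = int (d k) + p * ((int k - r) div p)"
      unfolding d_def using pos by simp
    then have "real k - r = d k + p * of_int ((int k - r) div p)"
      using arg_cong[of _ _ real_of_int] by simp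
    then have "2 * pi * k / p - \<phi> = (2 * pi * d k / p - \<psi>) + 2 * pi * of_int ((int k - r) div p)"
      unfolding \<psi>_def using pos by (simp add: field_simps)
    then show ?thesis by (metis sin_cos_eq_iff)
  qed
  have inj: "inj_on d K"
  proof
    fix k k' assume "k \<in> K" "k' \<in> K" "d k = d k'"
    then have "(int k - r) mod p = (int k' - r) mod p"
      unfolding d_def using pos by (simp add: eq_nat_nat_iff)
    then have "(int k - r + r) mod p = (int k' - r + r) mod p"
      by (rule mod_add_cong) simp
    then show "k = k'" using K \<open>k \<in> K\<close> \<open>k' \<in> K\<close> by (auto simp: zmod_int[symmetric] subset_eq)
  qed
  have "(\<Sum>k\<in>K. cos (2 * pi * k / p - \<phi>)) = (\<Sum>i\<in>d ` K. cos (2 * pi * i / p - \<psi>))"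
    by (simp add: sum.reindex[OF inj] rotate)
  also have "\<dots> \<le> sin (pi * card (d ` K) / p) / sin (pi / p)"
    using p psi pos unfolding \<psi>_def[symmetric] by (intro sum_cos_centered_le) (auto simp: d_def nat_less_iff)
  finally show ?thesis using card_image[OF inj] by simp
qed

lemma sum_Max_cos_le:
  fixes p :: nat and \<phi> :: "'b \<Rightarrow> real"
  assumes "odd p" "p \<ge> 3" and B: "finite B" "B \<noteq> {}"
  shows "(\<Sum>k<p. Max ((\<lambda>b. cos (2 * pi * k / p - \<phi> b)) ` B))
    \<le> card B * sin (pi / card B) / sin (pi / p)"
proof -
  define c where "c k b = cos (2 * pi * k / p - \<phi> b)" for k :: nat and b
  have "\<exists>b\<in>B. Max (c k ` B) = c k b" for k
  proof -
    have "Max (c k ` B) \<in> c k ` B" using B by (intro Max_in) auto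
    then show ?thesis by auto
  qed
  then obtain sel where sel: "\<And>k. sel k \<in> B" "\<And>k. Max (c k ` B) = c k (sel k)"
    by metis
  define K where "K b = {k \<in> {..<p}. sel k = b}" for b
  have img: "sel ` {..<p} \<subseteq> B" using sel(1) by auto
  have total: "(\<Sum>b\<in>B. real (card (K b))) = p"
    using sum.group[OF _ B(1) img, of "\<lambda>_. 1 :: real"] by (simp add: K_def)
  have sinp: "sin (pi / p) > 0" using assms by (intro sin_gt_zero) (auto simp: field_simps)
  have "(\<Sum>k<p. Max (c k ` B)) = (\<Sum>b\<in>B. \<Sum>k\<in>K b. c k b)"
    unfolding sel(2) K_def by (subst sum.group[OF _ B(1) img, symmetric]) (auto intro: sum.cong)
  also have "\<dots> \<le> (\<Sum>b\<in>B. sin (pi * card (K b) / p) / sin (pi / p))"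
    unfolding c_def using assms by (intro sum_mono sum_cos_roots_of_unity_le) (auto simp: K_def)
  also have "\<dots> = (\<Sum>b\<in>B. sin (pi * card (K b) / p)) / sin (pi / p)"
    by (simp add: sum_divide_distrib)
  also have "\<dots> \<le> card B * sin (pi / card B) / sin (pi / p)"
  proof (intro divide_right_mono sum_sin_le_card_mult_sin B)
    show "0 \<le> pi * card (K b) / p \<and> pi * card (K b) / p \<le> pi" for b
      using card_mono[of "{..<p}" "K b"] assms by (auto simp: K_def field_simps)
    show "(\<Sum>b\<in>B. pi * card (K b) / p) = pi"
      using total assms by (simp add: sum_divide_distrib[symmetric] sum_distrib_left[symmetric])
  qed (use sinp in simp)
  finally show ?thesis unfolding c_def .
qed

lemma sum_cis_roots_of_unity:
  fixes p :: nat
  assumes "p \<ge> 2"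
  shows "(\<Sum>v<p. cis (2 * pi * v / p)) = 0"
proof -
  define z where "z = cis (2 * pi / p)"
  have "sin (2 * pi / p) \<noteq> 0 \<or> cos (2 * pi / p) \<noteq> 1"
  proof (cases "p = 2")
    case False
    then have "0 < 2 * pi / p" "2 * pi / p < pi" using assms by (auto simp: field_simps)
    then show ?thesis using sin_gt_zero by fastforce
  qed simp
  then have "z \<noteq> 1" by (auto simp: z_def complex_eq_iff)
  moreover have "z ^ p = 1" unfolding z_def Complex.DeMoivre using assms by simp
  moreover have "cis (2 * pi * v / p) = z ^ v" for v :: nat
    by (simp add: z_def Complex.DeMoivre field_simps)
  ultimately show ?thesis using geometric_sum[of z p] by simp
qed

lemma cis_2pi_div_mod: "cis (2 * pi * real (k mod p) / p) = cis (2 * pi * k / p)"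
proof (cases "p = 0")
  case False
  have "k = k mod p + p * (k div p)" by simp
  then have "real k = real (k mod p) + real p * real (k div p)"
    by (metis of_nat_add of_nat_mult)
  then have "2 * pi * k / p = 2 * pi * real (k mod p) / p + 2 * pi * real (k div p)"
    using False by (simp add: field_simps)
  then have "cis (2 * pi * k / p) = cis (2 * pi * real (k mod p) / p) * cis (2 * pi * real (k div p))"
    by (simp only: cis_mult)
  then show ?thesis by (simp add: cis_multiple_2pi)
qed simp

lemma norm_eq_Re_mult_cis_Arg: "norm z = Re (z * cis (- Arg z))"
proof -
  have "z * cis (- Arg z) = rcis (norm z) (Arg z) * cis (- Arg z)" by (simp add: rcis_cmod_Arg)
  also have "\<dots> = complex_of_real (norm z)" by (simp add: rcis_def cis_mult)
  finally show ?thesis by simp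
qed

lemma sum_prod_le_of_sum_squares_le:
  fixes A :: "nat \<Rightarrow> 'b \<Rightarrow> real"
  assumes "finite U" and "n \<ge> 2" and "c \<ge> 0"
    and nonneg: "\<And>j u. j < n \<Longrightarrow> u \<in> U \<Longrightarrow> 0 \<le> A j u"
    and bounded: "\<And>j u. 2 \<le> j \<Longrightarrow> j < n \<Longrightarrow> u \<in> U \<Longrightarrow> A j u \<le> c"
    and squares: "(\<Sum>u\<in>U. (A 0 u)\<^sup>2) \<le> M" "(\<Sum>u\<in>U. (A 1 u)\<^sup>2) \<le> M"
  shows "(\<Sum>u\<in>U. \<Prod>j<n. A j u) \<le> M * c ^ (n - 2)"
proof -
  have split: "(\<Prod>j<n. A j u) = A 0 u * A 1 u * (\<Prod>j\<in>{2..<n}. A j u)" for u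
  proof -
    have "(\<Prod>j<n. A j u) = (\<Prod>j\<in>{0..<2}. A j u) * (\<Prod>j\<in>{2..<n}. A j u)"
      using prod.atLeastLessThan_concat[of 0 2 n "\<lambda>j. A j u"] \<open>n \<ge> 2\<close> by (simp add: atLeast0LessThan)
    then show ?thesis by (simp add: numeral_2_eq_2)
  qed
  have "(\<Sum>u\<in>U. \<Prod>j<n. A j u) \<le> (\<Sum>u\<in>U. A 0 u * A 1 u * c ^ (n - 2))"
  proof (rule sum_mono)
    fix u assume "u \<in> U"
    have "(\<Prod>j\<in>{2..<n}. A j u) \<le> (\<Prod>j\<in>{2..<n}. c)"
      using nonneg bounded \<open>u \<in> U\<close> by (intro prod_mono) auto
    then show "(\<Prod>j<n. A j u) \<le> A 0 u * A 1 u * c ^ (n - 2)"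
      unfolding split using nonneg[of 0 u] nonneg[of 1 u] \<open>u \<in> U\<close> \<open>n \<ge> 2\<close>
      by (simp add: mult_left_mono)
  qed
  also have "\<dots> \<le> (\<Sum>u\<in>U. ((A 0 u)\<^sup>2 + (A 1 u)\<^sup>2) / 2 * c ^ (n - 2))"
  proof (intro sum_mono mult_right_mono \<open>c \<ge> 0\<close> zero_le_power)
    show "A 0 u * A 1 u \<le> ((A 0 u)\<^sup>2 + (A 1 u)\<^sup>2) / 2" for u
      using sum_squares_bound[of "A 0 u" "A 1 u"] by (simp add: power2_eq_square)
  qed
  also have "\<dots> = ((\<Sum>u\<in>U. (A 0 u)\<^sup>2) + (\<Sum>u\<in>U. (A 1 u)\<^sup>2)) / 2 * c ^ (n - 2)"
    by (simp only: sum_distrib_right[symmetric] sum_divide_distrib[symmetric] sum.distrib)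
  also have "\<dots> \<le> M * c ^ (n - 2)"
    using squares \<open>c \<ge> 0\<close> by (intro mult_right_mono) auto
  finally show ?thesis .
qed

section \<open>Leakage distributions\<close>

lemma finite_vecs: "finite (vecs n :: (nat \<Rightarrow> 'a::finite) set)"
  unfolding vecs_def by (rule finite_PiE) auto

lemma card_vecs: "card (vecs n :: (nat \<Rightarrow> 'a::finite) set) = CARD('a) ^ n"
  unfolding vecs_def by (simp add: card_PiE)

lemma additive_code_subset_vecs: "additive_code n \<subseteq> vecs n"
  unfolding additive_code_def by auto

lemma additive_code_nonempty: "additive_code n \<noteq> {}"
proof -
  have "(\<lambda>i\<in>{..<n}. 0) \<in> additive_code n" unfolding additive_code_def vecs_def by simp
  then show ?thesis by blast
qed

lemma vecs_nonempty: "vecs n \<noteq> {}"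
  unfolding vecs_def by (simp add: PiE_eq_empty_iff)

lemma pmf_leak_dist:
  assumes "finite S" "S \<noteq> {}"
  shows "pmf (leak_dist n \<tau> S) y = card {x \<in> S. map (\<lambda>j. \<tau> j (x j)) [0..<n] = y} / card S"
  unfolding leak_dist_def pmf_map measure_pmf_of_set[OF assms(2,1)]
  by (simp add: Int_def vimage_def conj_commute)

lemma set_pmf_leak_dist:
  assumes "finite S" "S \<noteq> {}"
  shows "set_pmf (leak_dist n \<tau> S) = (\<lambda>x. map (\<lambda>j. \<tau> j (x j)) [0..<n]) ` S"
  using assms by (simp add: leak_dist_def)

lemma stat_dist_eq_sum:
  assumes "finite Y" "set_pmf P \<subseteq> Y" "set_pmf Q \<subseteq> Y"
  shows "stat_dist P Q = (1/2) * (\<Sum>y\<in>Y. \<bar>pmf P y - pmf Q y\<bar>)"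
proof -
  have "pmf P y = 0" "pmf Q y = 0" if "y \<notin> Y" for y
    using assms that by (auto simp: pmf_eq_0_set_pmf)
  then have "infsum (\<lambda>y. \<bar>pmf P y - pmf Q y\<bar>) UNIV = infsum (\<lambda>y. \<bar>pmf P y - pmf Q y\<bar>) Y"
    by (intro infsum_cong_neutral) auto
  then show ?thesis unfolding stat_dist_def using assms(1) by simp
qed

lemma leak_fiber_vecs:
  "{x \<in> vecs n. map (\<lambda>j. \<tau> j (x j)) [0..<n] = map g [0..<n]} = PiE {..<n} (\<lambda>j. \<tau> j -` {g j})"
proof (rule Set.set_eqI)
  fix x
  have "map (\<lambda>j. \<tau> j (x j)) [0..<n] = map g [0..<n] \<longleftrightarrow> (\<forall>j<n. \<tau> j (x j) = g j)"
    by (auto simp: map_eq_conv atLeast0LessThan)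
  then show "x \<in> {x \<in> vecs n. map (\<lambda>j. \<tau> j (x j)) [0..<n] = map g [0..<n]} \<longleftrightarrow> x \<in> PiE {..<n} (\<lambda>j. \<tau> j -` {g j})"
    unfolding vecs_def by (auto simp: PiE_iff)
qed

lemma leak_fiber_additive_code:
  "{x \<in> additive_code n. map (\<lambda>j. \<tau> j (x j)) [0..<n] = map g [0..<n]}
    = {x \<in> PiE {..<n} (\<lambda>j. \<tau> j -` {g j}). (\<Sum>i<n. x i) = 0}"
  using leak_fiber_vecs[of n \<tau> g] unfolding additive_code_def by blast

lemma stat_dist_leak_dist_eq_sum:
  fixes \<tau> :: "nat \<Rightarrow> 'a::finite \<Rightarrow> 'b" and S1 S2 :: "(nat \<Rightarrow> 'a) set"
  assumes S: "S1 \<subseteq> vecs n" "S2 \<subseteq> vecs n" "S1 \<noteq> {}" "S2 \<noteq> {}"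
    and B: "finite B" "\<And>j a. j < n \<Longrightarrow> \<tau> j a \<in> B"
  shows "stat_dist (leak_dist n \<tau> S1) (leak_dist n \<tau> S2) = (1/2) *
    (\<Sum>g\<in>PiE {..<n} (\<lambda>_. B). \<bar>pmf (leak_dist n \<tau> S1) (map g [0..<n]) - pmf (leak_dist n \<tau> S2) (map g [0..<n])\<bar>)"
proof -
  define Y where "Y = (\<lambda>g. map g [0..<n]) ` PiE {..<n} (\<lambda>_. B)"
  have inj: "inj_on (\<lambda>g. map g [0..<n]) (PiE {..<n} (\<lambda>_. B))"
    by (intro inj_onI PiE_ext) (auto simp: list_eq_iff_nth_eq)
  have leak_in_Y: "map (\<lambda>j. \<tau> j (x j)) [0..<n] \<in> Y" for x
  proof -
    have "map (\<lambda>j. \<tau> j (x j)) [0..<n] = map (restrict (\<lambda>j. \<tau> j (x j)) {..<n}) [0..<n]" by simp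
    moreover have "restrict (\<lambda>j. \<tau> j (x j)) {..<n} \<in> PiE {..<n} (\<lambda>_. B)" using B(2) by simp
    ultimately show ?thesis unfolding Y_def by (rule image_eqI)
  qed
  have finY: "finite Y" unfolding Y_def using B(1) by (intro finite_imageI finite_PiE) auto
  have fin: "finite S1" "finite S2" using S finite_vecs finite_subset by blast+
  have "stat_dist (leak_dist n \<tau> S1) (leak_dist n \<tau> S2)
      = (1/2) * (\<Sum>y\<in>Y. \<bar>pmf (leak_dist n \<tau> S1) y - pmf (leak_dist n \<tau> S2) y\<bar>)"
    using fin S leak_in_Y finY by (intro stat_dist_eq_sum) (auto simp: set_pmf_leak_dist)
  then show ?thesis unfolding Y_def sum.reindex[OF inj] comp_def .
qed

section \<open>Additive characters of a finite field\<close>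

lemma mod_add_eq_right_imp_zero:
  fixes t v p :: nat
  assumes "t < p" "v < p" "(t + v) mod p = v"
  shows "t = 0"
  using assms by (cases "t + v < p") (auto simp: le_mod_geq)

text \<open>\<open>T\<close> stands for the trace onto the prime field, with \<open>\<int>/p\<close> represented by \<open>{..<p}\<close>;
  additivity and nontriviality are all that the Fourier analysis below uses.\<close>

locale additive_functional =
  fixes p :: nat and T :: "'a::{finite,field} \<Rightarrow> nat"
  assumes prime: "prime p"
    and T_less: "T x < p"
    and T_add: "T (x + y) = (T x + T y) mod p"
    and T_nontrivial: "\<exists>x. T x \<noteq> 0"
begin

lemma p_ge_2: "p \<ge> 2" using prime prime_ge_2_nat by blast

lemma T_zero [simp]: "T 0 = 0"
  by (rule mod_add_eq_right_imp_zero[OF T_less T_less]) (metis T_add add_0)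

lemma T_of_nat_mult: "T (of_nat m * x) = (m * T x) mod p"
  by (induction m) (simp_all add: algebra_simps T_add mod_add_right_eq)

lemma T_surj: "v < p \<Longrightarrow> \<exists>x. T x = v"
proof -
  assume v: "v < p"
  obtain x where x: "T x \<noteq> 0" using T_nontrivial by blast
  have "coprime (T x) p"
    using prime T_less[of x] x by (metis coprime_commute nat_dvd_not_less neq0_conv prime_imp_coprime_nat)
  then obtain u where u: "[T x * u = Suc 0] (mod p)" using cong_solve_coprime_nat by blast
  have "T (of_nat (u * v) * x) = ((T x * u) * v) mod p" using T_of_nat_mult[of "u * v" x] by (simp add: mult_ac)
  also have "\<dots> = ((T x * u) mod p * v) mod p" by (simp add: mod_mult_left_eq)
  also have "(T x * u) mod p = 1" using u p_ge_2 by (simp add: cong_def)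
  finally have "T (of_nat (u * v) * x) = v" using v by simp
  then show ?thesis by blast
qed

lemma card_T_fiber: "v < p \<Longrightarrow> card {x. T x = v} = card {x. T x = 0}"
proof -
  assume "v < p"
  then obtain a where a: "T a = v" using T_surj by blast
  have "bij_betw (\<lambda>x. x + a) {x. T x = 0} {x. T x = v}"
  proof (rule bij_betw_byWitness[where f' = "\<lambda>y. y - a"])
    show "(\<lambda>x. x + a) ` {x. T x = 0} \<subseteq> {x. T x = v}" using T_add a T_less by auto
    have "T (y - a) = 0" if "T y = v" for y
      using mod_add_eq_right_imp_zero[OF T_less \<open>v < p\<close>] T_add[of "y - a" a] that a by simp
    then show "(\<lambda>y. y - a) ` {x. T x = v} \<subseteq> {x. T x = 0}" by auto
  qed auto
  then show ?thesis by (simp add: bij_betw_same_card)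
qed

lemma sum_T_equidistributed:
  fixes g :: "nat \<Rightarrow> 'c::field_char_0"
  shows "(\<Sum>x\<in>UNIV. g (T x)) = of_nat CARD('a) / of_nat p * (\<Sum>v<p. g v)"
proof -
  define c where "c = card {x. T x = 0}"
  have img: "T ` UNIV \<subseteq> {..<p}" using T_less by auto
  have fiber: "(\<Sum>x\<in>{x \<in> UNIV. T x = v}. h (T x)) = of_nat c * h v"
    if "v < p" for v and h :: "nat \<Rightarrow> 'c"
  proof -
    have "(\<Sum>x\<in>{x \<in> UNIV. T x = v}. h (T x)) = (\<Sum>x\<in>{x. T x = v}. h v)"
      by (intro sum.cong) auto
    then show ?thesis using card_T_fiber[OF that] by (simp add: c_def)
  qed
  have sum_eq: "(\<Sum>x\<in>UNIV. h (T x)) = of_nat c * (\<Sum>v<p. h v)" for h :: "nat \<Rightarrow> 'c"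
  proof -
    have "(\<Sum>x\<in>UNIV. h (T x)) = (\<Sum>v<p. \<Sum>x\<in>{x \<in> UNIV. T x = v}. h (T x))"
      by (rule sum.group[symmetric]) (use img in auto)
    also have "\<dots> = (\<Sum>v<p. of_nat c * h v)"
      by (intro sum.cong refl fiber) simp
    finally show ?thesis by (simp add: sum_distrib_left)
  qed
  have "(of_nat CARD('a) :: 'c) = of_nat c * of_nat p"
    using sum_eq[of "\<lambda>_. 1"] by simp
  then have "of_nat CARD('a) / of_nat p = (of_nat c :: 'c)"
    using p_ge_2 by simp
  then show ?thesis using sum_eq by simp
qed

definition character :: "'a \<Rightarrow> 'a \<Rightarrow> complex" where
  "character \<alpha> x = cis (2 * pi * T (\<alpha> * x) / p)"

lemma character_add: "character \<alpha> (x + y) = character \<alpha> x * character \<alpha> y"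
  unfolding character_def distrib_left T_add cis_2pi_div_mod
  by (simp add: cis_mult add_divide_distrib distrib_left)

lemma character_zero [simp]: "character 0 x = 1" "character \<alpha> 0 = 1"
  by (simp_all add: character_def)

lemma norm_character [simp]: "norm (character \<alpha> x) = 1"
  by (simp add: character_def)

lemma character_commute: "character \<alpha> x = character x \<alpha>"
  by (simp add: character_def mult.commute)

lemma character_diff: "character \<alpha> (x - y) = character \<alpha> x * cnj (character \<alpha> y)"
proof -
  have "character \<alpha> (x - y) * character \<alpha> y = character \<alpha> x"
    by (simp flip: character_add)
  moreover have "character \<alpha> y * cnj (character \<alpha> y) = 1"
    using complex_norm_square[of "character \<alpha> y"] by simp
  ultimately show ?thesis by (metis mult.assoc mult.right_neutral)
qed

lemma character_sum: "character \<alpha> (\<Sum>i\<in>I. x i) = (\<Prod>i\<in>I. character \<alpha> (x i))"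
  by (induction I rule: infinite_finite_induct) (simp_all add: character_add)

lemma sum_character:
  "(\<Sum>\<alpha>\<in>UNIV. character \<alpha> s) = (if s = 0 then of_nat CARD('a) else 0)"
proof (cases "s = 0")
  case False
  have "(\<Sum>\<alpha>\<in>UNIV. character \<alpha> s) = (\<Sum>\<beta>\<in>UNIV. cis (2 * pi * T \<beta> / p))"
    unfolding character_def using False
    by (intro sum.reindex_bij_witness[of _ "\<lambda>\<beta>. \<beta> / s" "\<lambda>\<alpha>. \<alpha> * s"]) auto
  also have "\<dots> = 0"
    using sum_T_equidistributed[of "\<lambda>v. cis (2 * pi * v / p)"] sum_cis_roots_of_unity[OF p_ge_2]
    by simp
  finally show ?thesis using False by simp
qed simp

lemma sum_norm_sum_character_squared:
  "(\<Sum>\<alpha>\<in>UNIV. (norm (\<Sum>x\<in>S. character \<alpha> x))\<^sup>2) = CARD('a) * card S"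
proof -
  have "complex_of_real (\<Sum>\<alpha>\<in>UNIV. (norm (\<Sum>x\<in>S. character \<alpha> x))\<^sup>2)
      = (\<Sum>\<alpha>\<in>UNIV. \<Sum>x\<in>S. \<Sum>y\<in>S. character \<alpha> (x - y))"
    by (simp only: of_real_sum complex_norm_square cnj_sum sum_product character_diff)
  also have "\<dots> = (\<Sum>x\<in>S. \<Sum>y\<in>S. \<Sum>\<alpha>\<in>UNIV. character \<alpha> (x - y))"
    by (subst sum.swap) (rule sum.cong[OF refl], rule sum.swap)
  also have "\<dots> = (\<Sum>x\<in>S. \<Sum>y\<in>S. if x = y then of_nat CARD('a) else 0)"
    by (simp add: sum_character)
  also have "\<dots> = of_real (CARD('a) * card S)"
    by (simp add: sum.delta)
  finally show ?thesis by (simp only: of_real_eq_iff)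
qed

lemma card_sum_eq_zero_fourier:
  fixes F :: "nat \<Rightarrow> 'a set" and I :: "nat set"
  assumes "finite I"
  shows "of_nat (card {x \<in> PiE I F. (\<Sum>i\<in>I. x i) = 0})
    = (\<Sum>\<alpha>\<in>UNIV. \<Prod>i\<in>I. \<Sum>a\<in>F i. character \<alpha> a) / of_nat CARD('a)"
proof -
  define P where "P = PiE I F"
  have "finite P" unfolding P_def using assms by (intro finite_PiE) auto
  then have "complex_of_nat (card {x \<in> P. (\<Sum>i\<in>I. x i) = 0})
      = (\<Sum>x\<in>P. if (\<Sum>i\<in>I. x i) = 0 then 1 else 0)"
    by (simp add: sum.inter_filter[symmetric])
  also have "\<dots> = (\<Sum>x\<in>P. (\<Sum>\<alpha>\<in>UNIV. \<Prod>i\<in>I. character \<alpha> (x i)) / of_nat CARD('a))"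
    by (intro sum.cong refl) (simp add: character_sum[symmetric] sum_character)
  also have "\<dots> = (\<Sum>\<alpha>\<in>UNIV. \<Sum>x\<in>P. \<Prod>i\<in>I. character \<alpha> (x i)) / of_nat CARD('a)"
    by (simp only: sum_divide_distrib[symmetric] sum.swap[of _ P])
  also have "\<dots> = (\<Sum>\<alpha>\<in>UNIV. \<Prod>i\<in>I. \<Sum>a\<in>F i. character \<alpha> a) / of_nat CARD('a)"
    unfolding P_def using assms by (subst prod_sum_PiE) auto
  finally show ?thesis unfolding P_def .
qed

lemma sum_character_right: "(\<Sum>x\<in>UNIV. character \<alpha> x) = (if \<alpha> = 0 then of_nat CARD('a) else 0)"
  using sum_character[of \<alpha>] by (simp add: character_commute)

lemma card_additive_code:
  assumes "n \<ge> 1"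
  shows "card (additive_code n :: (nat \<Rightarrow> 'a) set) = CARD('a) ^ (n - 1)"
proof -
  have code: "additive_code n = {x \<in> PiE {..<n} (\<lambda>_. UNIV). (\<Sum>i<n. x i) = (0 :: 'a)}"
    unfolding additive_code_def vecs_def ..
  have "(\<Prod>j<n. \<Sum>a\<in>UNIV. character \<alpha> a) = (if \<alpha> = 0 then of_nat CARD('a) ^ n else 0)" for \<alpha>
    using assms by (simp add: sum_character_right)
  then have "complex_of_nat (card (additive_code n :: (nat \<Rightarrow> 'a) set)) = of_nat CARD('a) ^ n / of_nat CARD('a)"
    unfolding code card_sum_eq_zero_fourier[OF finite_lessThan] by simp
  also have "\<dots> = of_nat (CARD('a) ^ (n - 1))"
    using assms by (cases n) simp_all
  finally show ?thesis by (simp only: of_nat_eq_iff)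
qed

lemma pmf_leak_additive_code:
  assumes "n \<ge> 1"
  shows "complex_of_real (pmf (leak_dist n \<tau> (additive_code n)) (map g [0..<n]))
    = (\<Sum>\<alpha>\<in>UNIV. \<Prod>j<n. \<Sum>a\<in>\<tau> j -` {g j}. character \<alpha> a) / of_nat CARD('a) ^ n"
proof -
  have fin: "finite (additive_code n :: (nat \<Rightarrow> 'a) set)"
    using finite_vecs additive_code_subset_vecs by (rule finite_subset[rotated])
  have "complex_of_real (pmf (leak_dist n \<tau> (additive_code n)) (map g [0..<n]))
      = of_nat (card {x \<in> PiE {..<n} (\<lambda>j. \<tau> j -` {g j}). (\<Sum>i<n. x i) = 0}) / of_nat CARD('a) ^ (n - 1)"
    unfolding pmf_leak_dist[OF fin additive_code_nonempty] leak_fiber_additive_code card_additive_code[OF assms]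
    by simp
  also have "\<dots> = (\<Sum>\<alpha>\<in>UNIV. \<Prod>j<n. \<Sum>a\<in>\<tau> j -` {g j}. character \<alpha> a) / (of_nat CARD('a) * of_nat CARD('a) ^ (n - 1))"
    unfolding card_sum_eq_zero_fourier[OF finite_lessThan] by simp
  also have "of_nat CARD('a) * of_nat CARD('a) ^ (n - 1) = (of_nat CARD('a) ^ n :: complex)"
    using assms by (simp flip: power_Suc)
  finally show ?thesis .
qed

lemma pmf_leak_vecs:
  "complex_of_real (pmf (leak_dist n \<tau> (vecs n)) (map g [0..<n]))
    = (\<Prod>j<n. \<Sum>a\<in>\<tau> j -` {g j}. character 0 a) / of_nat CARD('a) ^ n"
  unfolding pmf_leak_dist[OF finite_vecs vecs_nonempty] leak_fiber_vecs card_vecs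
  by (simp add: card_PiE)

lemma abs_pmf_leak_diff_le:
  assumes "n \<ge> 1"
  shows "\<bar>pmf (leak_dist n \<tau> (additive_code n)) (map g [0..<n]) - pmf (leak_dist n \<tau> (vecs n)) (map g [0..<n])\<bar>
    \<le> (\<Sum>\<alpha>\<in>-{0}. \<Prod>j<n. norm (\<Sum>a\<in>\<tau> j -` {g j}. character \<alpha> a)) / CARD('a) ^ n"
proof -
  define S where "S \<alpha> = (\<Prod>j<n. \<Sum>a\<in>\<tau> j -` {g j}. character \<alpha> a)" for \<alpha>
  have "complex_of_real (pmf (leak_dist n \<tau> (additive_code n)) (map g [0..<n]) - pmf (leak_dist n \<tau> (vecs n)) (map g [0..<n]))
      = ((\<Sum>\<alpha>\<in>UNIV. S \<alpha>) - S 0) / of_nat CARD('a) ^ n"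
    unfolding of_real_diff pmf_leak_additive_code[OF assms] pmf_leak_vecs S_def by (simp add: diff_divide_distrib)
  also have "(\<Sum>\<alpha>\<in>UNIV. S \<alpha>) - S 0 = (\<Sum>\<alpha>\<in>-{0}. S \<alpha>)"
    using sum.remove[of UNIV 0 S] by (simp add: Compl_eq_Diff_UNIV)
  finally have diff: "complex_of_real (pmf (leak_dist n \<tau> (additive_code n)) (map g [0..<n]) - pmf (leak_dist n \<tau> (vecs n)) (map g [0..<n]))
      = (\<Sum>\<alpha>\<in>-{0}. S \<alpha>) / of_nat CARD('a) ^ n" .
  have "\<bar>pmf (leak_dist n \<tau> (additive_code n)) (map g [0..<n]) - pmf (leak_dist n \<tau> (vecs n)) (map g [0..<n])\<bar>
      = norm (complex_of_real (pmf (leak_dist n \<tau> (additive_code n)) (map g [0..<n]) - pmf (leak_dist n \<tau> (vecs n)) (map g [0..<n])))"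
    by (simp only: norm_of_real)
  also have "\<dots> = norm (\<Sum>\<alpha>\<in>-{0}. S \<alpha>) / CARD('a) ^ n"
    unfolding diff by (simp add: norm_divide norm_power)
  also have "\<dots> \<le> (\<Sum>\<alpha>\<in>-{0}. norm (S \<alpha>)) / CARD('a) ^ n"
    by (intro divide_right_mono norm_sum) simp
  finally show ?thesis by (simp add: S_def prod_norm)
qed

definition fourier_mass :: "'b set \<Rightarrow> ('a \<Rightarrow> 'b) \<Rightarrow> 'a \<Rightarrow> real" where
  "fourier_mass B h \<alpha> = (\<Sum>b\<in>B. norm (\<Sum>a\<in>h -` {b}. character \<alpha> a)) / CARD('a)"

lemma fourier_mass_nonneg: "fourier_mass B h \<alpha> \<ge> 0"
  unfolding fourier_mass_def by (simp add: sum_nonneg)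

lemma stat_dist_le_sum_prod_fourier_mass:
  assumes "n \<ge> 1" and "finite B" and "\<forall>j<n. \<forall>a. \<tau> j a \<in> B"
  shows "stat_dist (leak_dist n \<tau> (additive_code n)) (leak_dist n \<tau> (vecs n))
    \<le> (1/2) * (\<Sum>\<alpha>\<in>-{0}. \<Prod>j<n. fourier_mass B (\<tau> j) \<alpha>)"
proof -
  define N where "N \<alpha> j b = norm (\<Sum>a\<in>\<tau> j -` {b}. character \<alpha> a)" for \<alpha> j b
  have "(\<Sum>g\<in>PiE {..<n} (\<lambda>_. B). \<bar>pmf (leak_dist n \<tau> (additive_code n)) (map g [0..<n]) - pmf (leak_dist n \<tau> (vecs n)) (map g [0..<n])\<bar>)
      \<le> (\<Sum>g\<in>PiE {..<n} (\<lambda>_. B). (\<Sum>\<alpha>\<in>-{0}. \<Prod>j<n. N \<alpha> j (g j)) / CARD('a) ^ n)"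
    unfolding N_def by (intro sum_mono abs_pmf_leak_diff_le assms(1))
  also have "\<dots> = (\<Sum>g\<in>PiE {..<n} (\<lambda>_. B). \<Sum>\<alpha>\<in>-{0}. (\<Prod>j<n. N \<alpha> j (g j)) / CARD('a) ^ n)"
    by (simp only: sum_divide_distrib)
  also have "\<dots> = (\<Sum>\<alpha>\<in>-{0}. \<Sum>g\<in>PiE {..<n} (\<lambda>_. B). (\<Prod>j<n. N \<alpha> j (g j)) / CARD('a) ^ n)"
    by (rule sum.swap)
  also have "\<dots> = (\<Sum>\<alpha>\<in>-{0}. (\<Prod>j<n. \<Sum>b\<in>B. N \<alpha> j b) / CARD('a) ^ n)"
    using assms(2) by (simp only: prod_sum_PiE finite_lessThan sum_divide_distrib[symmetric])
  also have "\<dots> = (\<Sum>\<alpha>\<in>-{0}. \<Prod>j<n. fourier_mass B (\<tau> j) \<alpha>)"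
    unfolding fourier_mass_def N_def prod_dividef by simp
  finally have sum_le: "(\<Sum>g\<in>PiE {..<n} (\<lambda>_. B). \<bar>pmf (leak_dist n \<tau> (additive_code n)) (map g [0..<n]) - pmf (leak_dist n \<tau> (vecs n)) (map g [0..<n])\<bar>)
      \<le> (\<Sum>\<alpha>\<in>-{0}. \<Prod>j<n. fourier_mass B (\<tau> j) \<alpha>)" .
  have "stat_dist (leak_dist n \<tau> (additive_code n)) (leak_dist n \<tau> (vecs n)) = (1/2) *
    (\<Sum>g\<in>PiE {..<n} (\<lambda>_. B). \<bar>pmf (leak_dist n \<tau> (additive_code n)) (map g [0..<n]) - pmf (leak_dist n \<tau> (vecs n)) (map g [0..<n])\<bar>)"
    using assms(3) by (intro stat_dist_leak_dist_eq_sum additive_code_subset_vecs order.refl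
        additive_code_nonempty vecs_nonempty assms(2)) auto
  with sum_le show ?thesis by simp
qed

lemma fourier_mass_le:
  assumes "\<alpha> \<noteq> 0" and "odd p" and B: "finite B" "B \<noteq> {}" and h: "\<And>a. h a \<in> B"
  shows "fourier_mass B h \<alpha> \<le> card B * sin (pi / card B) / (p * sin (pi / p))"
proof -
  have p3: "p \<ge> 3" using p_ge_2 \<open>odd p\<close> by presburger
  define \<phi> where "\<phi> b = Arg (\<Sum>a\<in>h -` {b}. character \<alpha> a)" for b
  define G where "G k = Max ((\<lambda>b. cos (2 * pi * k / p - \<phi> b)) ` B)" for k :: nat
  have img: "h ` UNIV \<subseteq> B" using h by auto
  have "(\<Sum>b\<in>B. norm (\<Sum>a\<in>h -` {b}. character \<alpha> a))
      = (\<Sum>b\<in>B. Re ((\<Sum>a\<in>h -` {b}. character \<alpha> a) * cis (- \<phi> b)))"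
    unfolding \<phi>_def by (simp add: norm_eq_Re_mult_cis_Arg)
  also have "\<dots> = (\<Sum>b\<in>B. \<Sum>a\<in>{a \<in> UNIV. h a = b}. cos (2 * pi * T (\<alpha> * a) / p - \<phi> (h a)))"
    by (intro sum.cong refl) (auto simp: sum_distrib_right Re_sum character_def cis_mult vimage_def)
  also have "\<dots> = (\<Sum>a\<in>UNIV. cos (2 * pi * T (\<alpha> * a) / p - \<phi> (h a)))"
    by (rule sum.group[OF _ B(1) img]) simp
  also have "\<dots> \<le> (\<Sum>a\<in>UNIV. G (T (\<alpha> * a)))"
    unfolding G_def using B h by (intro sum_mono Max_ge) auto
  also have "\<dots> = (\<Sum>a\<in>UNIV. G (T a))"
    using \<open>\<alpha> \<noteq> 0\<close> by (intro sum.reindex_bij_witness[of _ "\<lambda>a. a / \<alpha>" "\<lambda>a. \<alpha> * a"]) auto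
  also have "\<dots> = CARD('a) / p * (\<Sum>k<p. G k)"
    by (rule sum_T_equidistributed)
  also have "\<dots> \<le> CARD('a) / p * (card B * sin (pi / card B) / sin (pi / p))"
    unfolding G_def using \<open>odd p\<close> p3 B by (intro mult_left_mono sum_Max_cos_le) auto
  finally show ?thesis unfolding fourier_mass_def by (simp add: field_simps)
qed

lemma sum_fourier_mass_squared_le:
  assumes B: "finite B" and h: "\<And>a. h a \<in> B"
  shows "(\<Sum>\<alpha>\<in>UNIV. (fourier_mass B h \<alpha>)\<^sup>2) \<le> card B"
proof -
  define N where "N \<alpha> b = norm (\<Sum>a\<in>h -` {b}. character \<alpha> a)" for \<alpha> b
  define q where "q = real CARD('a)"
  have q: "q > 0" by (simp add: q_def)
  have "(fourier_mass B h \<alpha>)\<^sup>2 \<le> card B * (\<Sum>b\<in>B. (N \<alpha> b)\<^sup>2) / q\<^sup>2" for \<alpha>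
    unfolding fourier_mass_def N_def q_def power_divide
    by (intro divide_right_mono sum_squared_le_sum_of_squares[THEN order.trans]) (simp_all add: mult.commute)
  then have "(\<Sum>\<alpha>\<in>UNIV. (fourier_mass B h \<alpha>)\<^sup>2) \<le> (\<Sum>\<alpha>\<in>UNIV. card B * (\<Sum>b\<in>B. (N \<alpha> b)\<^sup>2) / q\<^sup>2)"
    by (rule sum_mono)
  also have "\<dots> = card B * (\<Sum>b\<in>B. \<Sum>\<alpha>\<in>UNIV. (N \<alpha> b)\<^sup>2) / q\<^sup>2"
    by (simp add: sum.swap[of _ UNIV] sum_distrib_left flip: sum_divide_distrib)
  also have "(\<Sum>b\<in>B. \<Sum>\<alpha>\<in>UNIV. (N \<alpha> b)\<^sup>2) = q * (\<Sum>b\<in>B. real (card (h -` {b})))"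
    unfolding N_def sum_norm_sum_character_squared q_def by (simp add: sum_distrib_left)
  also have "(\<Sum>b\<in>B. real (card (h -` {b}))) = q"
    using sum.group[OF _ B(1), of UNIV h "\<lambda>_. 1 :: real"] h unfolding q_def
    by (auto simp: vimage_def)
  finally show ?thesis using q by (simp add: power2_eq_square)
qed

lemma stat_dist_additive_code_le:
  fixes \<tau> :: "nat \<Rightarrow> 'a \<Rightarrow> 'b"
  assumes "odd p" and "n \<ge> 2" and B: "finite B" "B \<noteq> {}" and \<tau>: "\<forall>j<n. \<forall>a. \<tau> j a \<in> B"
  shows "stat_dist (leak_dist n \<tau> (additive_code n)) (leak_dist n \<tau> (vecs n))
    \<le> (1/2) * card B * (card B * sin (pi / card B) / (p * sin (pi / p))) ^ (n - 2)"
proof -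
  define c where "c = card B * sin (pi / card B) / (p * sin (pi / p))"
  have "card B \<ge> 1" using B by (simp add: Suc_le_eq card_gt_0_iff)
  then have "sin (pi / card B) \<ge> 0" by (intro sin_ge_zero) (auto simp: field_simps)
  moreover have "sin (pi / p) \<ge> 0" using p_ge_2 by (intro sin_ge_zero) (auto simp: field_simps)
  ultimately have "c \<ge> 0" by (simp add: c_def)
  have squares: "(\<Sum>\<alpha>\<in>-{0}. (fourier_mass B (\<tau> j) \<alpha>)\<^sup>2) \<le> card B" if "j < n" for j
    using sum_mono2[of UNIV "-{0}" "\<lambda>\<alpha>. (fourier_mass B (\<tau> j) \<alpha>)\<^sup>2"]
      sum_fourier_mass_squared_le[OF B(1), of "\<tau> j"] \<tau> that by auto
  have "stat_dist (leak_dist n \<tau> (additive_code n)) (leak_dist n \<tau> (vecs n))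
      \<le> (1/2) * (\<Sum>\<alpha>\<in>-{0}. \<Prod>j<n. fourier_mass B (\<tau> j) \<alpha>)"
    using assms by (intro stat_dist_le_sum_prod_fourier_mass) auto
  also have "(\<Sum>\<alpha>\<in>-{0}. \<Prod>j<n. fourier_mass B (\<tau> j) \<alpha>) \<le> card B * c ^ (n - 2)"
    using assms squares[of 0] squares[of 1] \<open>c \<ge> 0\<close>
    by (intro sum_prod_le_of_sum_squares_le) (auto simp: c_def fourier_mass_nonneg intro: fourier_mass_le)
  finally show ?thesis unfolding c_def by simp
qed

end

section \<open>The trace of a finite field\<close>

(* The library's finite_field_power_card_eq_same is stated for the sort finite_field,
   which a type variable of sort {finite,field} does not have. *)
lemma power_card_eq_self:
  fixes x :: "'a::{finite,field}"
  shows "x ^ CARD('a) = x"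
proof (cases "x = 0")
  case False
  have "(\<Prod>y\<in>-{0}. y) = (\<Prod>y\<in>-{0}. x * y)"
    using False by (intro prod.reindex_bij_witness[of _ "\<lambda>y. x * y" "\<lambda>y. y / x"]) auto
  also have "\<dots> = x ^ card (- {0 :: 'a}) * (\<Prod>y\<in>-{0}. y)"
    by (simp add: prod.distrib)
  finally have "x ^ card (- {0 :: 'a}) = 1"
    by (simp add: prod_zero_iff)
  moreover have "CARD('a) = Suc (card (- {0 :: 'a}))"
    using card_Suc_Diff1[of UNIV "0 :: 'a"] by (simp add: Compl_eq_Diff_UNIV)
  ultimately show ?thesis by simp
qed simp

lemma CHAR_eq_of_card_eq_prime_power:
  assumes "prime p" and "CARD('a::{finite,field}) = p ^ w"
  shows "CHAR('a) = p"
proof -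
  have "prime CHAR('a)" by (intro prime_CHAR_semidom finite_imp_CHAR_pos) simp
  moreover have "CHAR('a) dvd p ^ w" using CHAR_dvd_CARD[where 'a = 'a] assms(2) by simp
  ultimately show ?thesis using assms(1) by (metis prime_dvd_power primes_dvd_imp_eq)
qed

definition field_trace :: "nat \<Rightarrow> nat \<Rightarrow> 'a::comm_ring_1 \<Rightarrow> 'a" where
  "field_trace p w x = (\<Sum>i<w. x ^ p ^ i)"

definition trace_residue :: "nat \<Rightarrow> nat \<Rightarrow> 'a::comm_ring_1 \<Rightarrow> nat" where
  "trace_residue p w x = (THE k. k < p \<and> of_nat k = field_trace p w x)"

context
  fixes p w :: nat
  assumes prime: "prime p" and w: "w \<ge> 1" and card_eq: "CARD('a::{finite,field}) = p ^ w"
begin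

lemma CHAR_eq: "CHAR('a) = p"
  using CHAR_eq_of_card_eq_prime_power[OF prime card_eq] .

lemma field_trace_add: "field_trace p w (x + y :: 'a) = field_trace p w x + field_trace p w y"
  unfolding field_trace_def
  by (simp add: freshmans_dream'[where 'a = 'a, OF _ refl, unfolded CHAR_eq] prime sum.distrib)

lemma field_trace_power_char: "field_trace p w (x :: 'a) ^ p = field_trace p w x"
proof -
  obtain v where v: "w = Suc v" using w by (cases w) auto
  have "field_trace p w x ^ p = (\<Sum>i<w. x ^ p ^ Suc i)"
    unfolding field_trace_def freshmans_dream_sum[where 'a = 'a, OF _ refl, unfolded CHAR_eq, OF prime]
    by (simp add: power_mult[symmetric] mult.commute)
  also have "\<dots> = (\<Sum>i<v. x ^ p ^ Suc i) + x ^ p ^ 0"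
    using power_card_eq_self[of x] by (simp add: v card_eq)
  also have "\<dots> = field_trace p w x"
    unfolding field_trace_def v sum.lessThan_Suc_shift by simp
  finally show ?thesis .
qed

lemma of_nat_power_char: "(of_nat k :: 'a) ^ p = of_nat k"
  using freshmans_dream_sum[where 'a = 'a, OF _ refl, unfolded CHAR_eq, OF prime, of "\<lambda>_. 1" "{..<k}"]
  by simp

lemma inj_on_of_nat_char: "inj_on (of_nat :: nat \<Rightarrow> 'a) {..<p}"
  by (intro inj_onI) (simp add: of_nat_eq_iff_cong_CHAR CHAR_eq cong_def)

lemma fixed_points_power_char: "{y :: 'a. y ^ p = y} = of_nat ` {..<p}"
proof (rule sym, rule card_subset_eq)
  show "of_nat ` {..<p} \<subseteq> {y :: 'a. y ^ p = y}" using of_nat_power_char by auto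
  define q :: "'a poly" where "q = Polynomial.monom 1 p - [:0, 1:]"
  have p1: "p > 1" using prime prime_gt_1_nat by blast
  have "Polynomial.coeff q p = 1" using p1 by (simp add: q_def coeff_pCons split: nat.split)
  then have "q \<noteq> 0" by auto
  moreover have "degree q \<le> p"
    unfolding q_def using p1 by (intro degree_diff_le) (auto simp: degree_monom_le)
  moreover have "{y :: 'a. y ^ p = y} = {y. poly q y = 0}" by (auto simp: q_def poly_monom)
  ultimately have "card {y :: 'a. y ^ p = y} \<le> p" using card_poly_roots_bound by fastforce
  then show "card (of_nat ` {..<p} :: 'a set) = card {y :: 'a. y ^ p = y}"
    using card_image[OF inj_on_of_nat_char] card_mono[OF _ \<open>of_nat ` {..<p} \<subseteq> _\<close>] by simp
qed simp

lemma field_trace_nonzero: "\<exists>x :: 'a. field_trace p w x \<noteq> 0"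
proof (rule ccontr)
  assume vanish: "\<not> ?thesis"
  define q :: "'a poly" where "q = (\<Sum>i<w. Polynomial.monom 1 (p ^ i))"
  have p1: "p > 1" using prime prime_gt_1_nat by blast
  have "Polynomial.coeff q (p ^ (w - 1)) = (\<Sum>i<w. if i = w - 1 then 1 else 0)"
    unfolding q_def coeff_sum using p1 by (intro sum.cong) (auto simp: coeff_monom)
  then have "q \<noteq> 0" using w by auto
  moreover have "degree q \<le> p ^ (w - 1)"
    unfolding q_def using p1 by (intro degree_sum_le) (auto simp: degree_monom_eq intro: power_increasing)
  moreover have "{x :: 'a. poly q x = 0} = UNIV"
    using vanish by (auto simp: q_def field_trace_def poly_sum poly_monom)
  ultimately have "p ^ w \<le> p ^ (w - 1)" using card_poly_roots_bound[of q] card_eq by simp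
  moreover have "p ^ (w - 1) < p ^ w" using p1 w by (intro power_strict_increasing) auto
  ultimately show False by linarith
qed

lemma trace_residue_spec: "trace_residue p w x < p \<and> of_nat (trace_residue p w x) = field_trace p w (x :: 'a)"
proof -
  have "field_trace p w x \<in> of_nat ` {..<p}"
    using field_trace_power_char fixed_points_power_char by blast
  then have "\<exists>!k. k < p \<and> (of_nat k :: 'a) = field_trace p w x"
    using inj_on_of_nat_char by (auto simp: inj_on_def)
  then show ?thesis unfolding trace_residue_def by (rule theI')
qed

lemma additive_functional_trace_residue: "additive_functional p (trace_residue p w :: 'a \<Rightarrow> nat)"
proof
  show "prime p" by (fact prime)
  show "trace_residue p w x < p" for x :: 'a using trace_residue_spec by blast
  show "trace_residue p w (x + y) = (trace_residue p w x + trace_residue p w y) mod p" for x y :: 'a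
  proof -
    have "(of_nat ((trace_residue p w x + trace_residue p w y) mod p) :: 'a)
        = of_nat (trace_residue p w x + trace_residue p w y)"
      by (simp only: of_nat_eq_iff_cong_CHAR CHAR_eq) (simp add: cong_def)
    also have "\<dots> = field_trace p w (x + y)"
      using trace_residue_spec[of x] trace_residue_spec[of y] by (simp add: field_trace_add)
    finally have "(of_nat ((trace_residue p w x + trace_residue p w y) mod p) :: 'a) = field_trace p w (x + y)" .
    then show ?thesis
      using trace_residue_spec[of "x + y"] inj_on_of_nat_char prime_gt_0_nat[OF prime]
      by (auto simp: inj_on_def)
  qed
  obtain x :: 'a where "field_trace p w x \<noteq> 0" using field_trace_nonzero by blast
  then show "\<exists>x :: 'a. trace_residue p w x \<noteq> 0" using trace_residue_spec[of x] by (metis of_nat_0)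
qed

end

theorem corollary5p2:
  fixes p w n \<mu> :: nat
    and \<tau> :: "nat \<Rightarrow> 'a::{finite,field} \<Rightarrow> bool list"
  assumes "prime p" and "w \<ge> 1" and "CARD('a) = p ^ w"
    and "n \<ge> 2" and "\<mu> \<ge> 1" and "2 ^ \<mu> < p"
    and "\<forall>j<n. \<forall>a. length (\<tau> j a) = \<mu>"
  shows "stat_dist (leak_dist n \<tau> (additive_code n)) (leak_dist n \<tau> (vecs n))
         \<le> (1/2) * 2 ^ \<mu> *
           ((2 ^ \<mu> * sin (pi / 2 ^ \<mu>)) / (real p * sin (pi / real p))) ^ (n - 2)"
proof -
  interpret additive_functional p "trace_residue p w :: 'a \<Rightarrow> nat"
    using assms(1-3) by (rule additive_functional_trace_residue)
  define B where "B = {xs :: bool list. length xs = \<mu>}"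
  have card_B: "card B = 2 ^ \<mu>"
    unfolding B_def using card_lists_length_eq[of "UNIV :: bool set" \<mu>] by simp
  have "(2::nat) ^ 1 \<le> 2 ^ \<mu>" using assms(5) by (intro power_increasing) auto
  then have "odd p" using assms(1,6) by (intro prime_odd_nat) auto
  moreover have "finite B" "B \<noteq> {}"
    using card_B card_gt_0_iff[of B] by simp_all
  ultimately show ?thesis
    using stat_dist_additive_code_le[of n B \<tau>] assms(4,7) card_B by (simp add: B_def)
qed

end
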